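(* Let $b_s$ be a finite bridge and let $V$ be a uniform random variable on $[0,1]$ independent of $b_s$. Let $(H_i)$ be the (finitely many) holes of $b_s$ and $H=\bigcup_iH_i$. Then there exists a uniform random variable $U$ on $[0,1]$ such that $U<\mathscr{D}(b_s)$ if and only if $V\notin H$.
   Context: For $s=(s_i)$ with $s_1\ge s_2\ge\dots\ge0$, $\sum_i s_i\le1$, $s_0=1-\sum_is_i$, and i.i.d. uniform $(U_i)$ independent of $s$, the $s$-bridge is $b_s(y)=s_0y+\sum_is_i\mathbf{1}\{U_i\le y\}$; it is a finite bridge if only finitely many $s_i$ are nonzero. A hole of a finite bridge $b_s$ is a maximal connected component of $[0,1]\setminus b_s([0,1])$ (a half-open interval). $\mathscr{D}(b_s)$ is the dust $1-\sum_B\mathrm{freq}(B)$ of the exchangeable paintbox partition $\{i\sim j\iff b_s^{-1}(V_i)=b_s^{-1}(V_j)\}$, where $(V_i)$ are i.i.d. uniform independent of everything, $b_s^{-1}(y)=\inf\{z:b_s(z)>y\}$, and $\mathrm{freq}(B)=\lim_k|B\cap\{1,\dots,k\}|/k$. *)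

theory Defs
  imports "HOL-Probability.Probability"
begin

text \<open>A ranked mass partition s = (s_1, s_2, ...) is represented by s :: nat => real,
  with s 0 standing for s_1, s 1 for s_2, etc.  Finite bridges: only finitely many
  nonzero entries.\<close>

definition finite_ranked_partition :: "(nat \<Rightarrow> real) \<Rightarrow> bool" where
  "finite_ranked_partition s \<longleftrightarrow>
     (\<forall>i. s (Suc i) \<le> s i) \<and> (\<forall>i. 0 \<le> s i) \<and>
     finite {i. s i \<noteq> 0} \<and> (\<Sum>i\<in>{i. s i \<noteq> 0}. s i) \<le> 1"

definition s0 :: "(nat \<Rightarrow> real) \<Rightarrow> real" where
  "s0 s = 1 - (\<Sum>i\<in>{i. s i \<noteq> 0}. s i)"

definition bridge :: "(nat \<Rightarrow> real) \<Rightarrow> (nat \<Rightarrow> real) \<Rightarrow> real \<Rightarrow> real" where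
  "bridge s u y = s0 s * y + (\<Sum>i\<in>{i. s i \<noteq> 0}. s i * indicator {u i..} y)"

definition holes :: "(real \<Rightarrow> real) \<Rightarrow> real set set" where
  "holes f = {connected_component_set ({0..1} - f ` {0..1}) x | x. x \<in> {0..1} - f ` {0..1}}"

definition hole_union :: "(real \<Rightarrow> real) \<Rightarrow> real set" where
  "hole_union f = \<Union>(holes f)"

definition binv :: "(real \<Rightarrow> real) \<Rightarrow> real \<Rightarrow> real" where
  "binv f y = Inf {z\<in>{0..1}. f z > y}"

definition paintbox_blocks :: "(real \<Rightarrow> real) \<Rightarrow> (nat \<Rightarrow> real) \<Rightarrow> nat set set" where
  "paintbox_blocks f v = {{j. binv f (v j) = binv f (v i)} | i. True}"

definition freq :: "nat set \<Rightarrow> real" where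
  "freq B = lim (\<lambda>k. real (card (B \<inter> {..<k})) / real k)"

definition dust :: "(real \<Rightarrow> real) \<Rightarrow> (nat \<Rightarrow> real) \<Rightarrow> real" where
  "dust f v = 1 - (\<Sum>\<^sub>\<infinity>B\<in>paintbox_blocks f v. freq B)"

text \<open>Indices for the family of real random variables: U_k, V_k (paintbox), and V.\<close>
datatype ridx = UI nat | VI nat | VV

definition rvfam :: "(nat \<Rightarrow> 'a \<Rightarrow> real) \<Rightarrow> (nat \<Rightarrow> 'a \<Rightarrow> real) \<Rightarrow> ('a \<Rightarrow> real) \<Rightarrow> ridx \<Rightarrow> 'a \<Rightarrow> real" where
  "rvfam Us Vs V i = (case i of UI k \<Rightarrow> Us k | VI k \<Rightarrow> Vs k | VV \<Rightarrow> V)"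

end

theory Submission
  imports Defs
begin

text \<open>Let the atoms of the finite bridge sit at distinct points \<open>u\<^sub>i\<close> of \<open>]0,1[\<close>. The jump at
  \<open>u\<^sub>i\<close> leaves the gap \<open>]a\<^sub>i, a\<^sub>i + s\<^sub>i[\<close>, where \<open>a\<^sub>i = b(u\<^sub>i-)\<close>, out of the range of \<open>b\<close>, and \<open>b\<close> is
  continuous elsewhere; so, up to the finitely many gap endpoints, the hole set \<open>H\<close> is the disjoint
  union of the gaps and has length \<open>1 - s\<^sub>0\<close>. The inverse \<open>b\<^sup>-\<^sup>1\<close> sends the closed gap of atom \<open>i\<close>
  to \<open>u\<^sub>i\<close> and is injective off the gaps, so by the strong law of large numbers for the \<open>V\<^sub>j\<close> the
  paintbox block of atom \<open>i\<close> has frequency \<open>s\<^sub>i\<close> and all other blocks are singletons: the dust is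
  \<open>s\<^sub>0\<close> almost surely.

  Now let \<open>U = s\<^sub>0 + (1 - s\<^sub>0) W\<close> if \<open>V \<in> H\<close> and \<open>U = s\<^sub>0 W\<close> otherwise, with \<open>W = V\<^sub>0\<close>; reusing
  \<open>V\<^sub>0\<close> is harmless because the dust is almost surely the function \<open>s\<^sub>0\<close> of \<open>s\<close>. Given \<open>s\<close> and
  the \<open>U\<^sub>i\<close>, the variables \<open>V\<close> and \<open>W\<close> are independent uniforms and \<open>V \<in> H\<close> has probability
  \<open>1 - s\<^sub>0\<close>, so \<open>U\<close> is uniform, and \<open>U < s\<^sub>0\<close> exactly when \<open>V \<notin> H\<close> (almost surely).\<close>

section \<open>Empirical frequencies\<close>

definition emp_freq :: "(nat \<Rightarrow> real) \<Rightarrow> real set \<Rightarrow> nat \<Rightarrow> real" where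
  "emp_freq v L k = real (card ({j. v j \<in> L} \<inter> {..<k})) / real k"

definition equidistributed :: "(nat \<Rightarrow> real) \<Rightarrow> bool" where
  "equidistributed v \<longleftrightarrow>
     (\<forall>p\<in>\<rat>. \<forall>q\<in>\<rat>. emp_freq v {p..q} \<longlonglongrightarrow> measure lborel ({p..q} \<inter> {0..1}))"

lemma emp_freq_mono: "L \<subseteq> L' \<Longrightarrow> emp_freq v L k \<le> emp_freq v L' k"
  unfolding emp_freq_def by (intro divide_right_mono) (auto intro!: card_mono)

lemma equidistributed_emp_freq:
  assumes v: "equidistributed v"
    and ab: "0 \<le> a" "a \<le> b" "b \<le> 1" and L: "{a<..<b} \<subseteq> L" "L \<subseteq> {a..b}"
  shows "emp_freq v L \<longlonglongrightarrow> b - a"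
proof (rule order_tendstoI)
  fix c assume c: "c > b - a"
  then obtain p q where p: "p \<in> \<rat>" "2 * p > a + b - c" "p < a"
    and q: "q \<in> \<rat>" "b < q" "2 * q < c + a + b"
    using Rats_dense_in_real[of "(a + b - c) / 2" a] Rats_dense_in_real[of b "(c + a + b) / 2"]
    by auto
  have "measure lborel ({p..q} \<inter> {0..1}) < c" using p q ab c by auto
  moreover have "emp_freq v {p..q} \<longlonglongrightarrow> measure lborel ({p..q} \<inter> {0..1})"
    using v p q by (auto simp: equidistributed_def)
  ultimately have "eventually (\<lambda>k. emp_freq v {p..q} k < c) sequentially"
    by (simp add: order_tendstoD)
  moreover have "L \<subseteq> {p..q}" using L p q by auto
  ultimately show "eventually (\<lambda>k. emp_freq v L k < c) sequentially"
    by (elim eventually_mono) (meson emp_freq_mono le_less_trans)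
next
  fix c assume c: "c < b - a"
  show "eventually (\<lambda>k. c < emp_freq v L k) sequentially"
  proof (cases "c < 0")
    case True
    then show ?thesis by (intro always_eventually) (auto simp: emp_freq_def intro: less_le_trans)
  next
    case False
    obtain p q where p: "p \<in> \<rat>" "a < p" "3 * p < 2 * a + b - c"
      and q: "q \<in> \<rat>" "3 * q > a + 2 * b + c" "q < b"
      using Rats_dense_in_real[of a "(2 * a + b - c) / 3"]
        Rats_dense_in_real[of "(a + 2 * b + c) / 3" b] c False by auto
    then have "c < measure lborel ({p..q} \<inter> {0..1})" using ab False by auto
    moreover have "emp_freq v {p..q} \<longlonglongrightarrow> measure lborel ({p..q} \<inter> {0..1})"
      using v p q by (auto simp: equidistributed_def)
    ultimately have "eventually (\<lambda>k. c < emp_freq v {p..q} k) sequentially"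
      by (simp add: order_tendstoD)
    moreover have "{p..q} \<subseteq> L" using L p q by auto
    ultimately show ?thesis
      by (elim eventually_mono) (meson emp_freq_mono less_le_trans)
  qed
qed

section \<open>Gaps and paintbox of a finite bridge\<close>

text \<open>\<open>gap_start \<sigma> u i\<close> is the left limit of the bridge at the atom \<open>u i\<close>, so the jump there leaves
  \<open>]gap_start \<sigma> u i, gap_start \<sigma> u i + \<sigma> i[\<close> out of its range. Series rather than sums over the
  support of \<open>\<sigma>\<close> make these notions Borel in \<open>(\<sigma>, u)\<close>; for a finite partition
  \<open>1 - suminf \<sigma> = s0 \<sigma>\<close>.\<close>

definition gap_start :: "(nat \<Rightarrow> real) \<Rightarrow> (nat \<Rightarrow> real) \<Rightarrow> nat \<Rightarrow> real" where
  "gap_start \<sigma> u i = (1 - suminf \<sigma>) * u i + (\<Sum>j. if u j < u i then \<sigma> j else 0)"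

definition gaps :: "(nat \<Rightarrow> real) \<Rightarrow> (nat \<Rightarrow> real) \<Rightarrow> real set" where
  "gaps \<sigma> u = {y. \<exists>i. \<sigma> i \<noteq> 0 \<and> gap_start \<sigma> u i < y \<and> y < gap_start \<sigma> u i + \<sigma> i}"

definition gap_ends :: "(nat \<Rightarrow> real) \<Rightarrow> (nat \<Rightarrow> real) \<Rightarrow> real set" where
  "gap_ends \<sigma> u = {y. \<exists>i. \<sigma> i \<noteq> 0 \<and> (y = gap_start \<sigma> u i \<or> y = gap_start \<sigma> u i + \<sigma> i)}"

lemma hole_union_eq: "hole_union f = {0..1} - f ` {0..1}"
proof -
  have "holes f = connected_component_set ({0..1} - f ` {0..1}) ` ({0..1} - f ` {0..1})"
    unfolding holes_def by blast
  then show ?thesis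
    unfolding hole_union_def using Union_connected_component by simp
qed

locale finite_bridge =
  fixes \<sigma> u :: "nat \<Rightarrow> real"
  assumes partition: "finite_ranked_partition \<sigma>"
    and atoms_in_unit: "\<And>i. \<sigma> i \<noteq> 0 \<Longrightarrow> 0 < u i \<and> u i < 1"
    and atoms_distinct: "inj_on u {i. \<sigma> i \<noteq> 0}"
begin

abbreviation "N \<equiv> {i. \<sigma> i \<noteq> 0}"
abbreviation "b \<equiv> bridge \<sigma> u"

lemma finite_N: "finite N"
  using partition by (simp add: finite_ranked_partition_def)

lemma weight_nonneg: "0 \<le> \<sigma> i"
  using partition by (simp add: finite_ranked_partition_def)

lemma s0_nonneg: "0 \<le> s0 \<sigma>"
  using partition by (simp add: finite_ranked_partition_def s0_def)

lemma sum_weights: "(\<Sum>i\<in>N. \<sigma> i) = 1 - s0 \<sigma>"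
  by (simp add: s0_def)

lemma s0_le_1: "s0 \<sigma> \<le> 1"
  using sum_weights sum_nonneg[of N \<sigma>] weight_nonneg by simp

lemma atoms_eq_iff: "i \<in> N \<Longrightarrow> j \<in> N \<Longrightarrow> u j = u i \<longleftrightarrow> j = i"
  using atoms_distinct by (auto simp: inj_on_def)

lemma suminf_weights: "suminf \<sigma> = 1 - s0 \<sigma>"
  by (subst suminf_finite[OF finite_N]) (auto simp: s0_def)

lemma gap_start_eq: "gap_start \<sigma> u i = s0 \<sigma> * u i + (\<Sum>j\<in>N. if u j < u i then \<sigma> j else 0)"
  unfolding gap_start_def suminf_weights using finite_N by (subst suminf_finite) auto

lemma bridge_eq: "b x = s0 \<sigma> * x + (\<Sum>j\<in>N. \<sigma> j * indicator {u j..} x)"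
  by (simp add: bridge_def)

lemma bridge_mono: "x \<le> y \<Longrightarrow> b x \<le> b y"
  unfolding bridge_eq
  by (intro add_mono mult_left_mono sum_mono s0_nonneg weight_nonneg) (auto simp: indicator_def)

lemma bridge_0: "b 0 = 0"
  unfolding bridge_eq by (auto simp: indicator_def dest: atoms_in_unit intro!: sum.neutral)

lemma bridge_1: "b 1 = 1"
proof -
  have "(\<Sum>j\<in>N. \<sigma> j * indicator {u j..} (1::real)) = (\<Sum>j\<in>N. \<sigma> j)"
    by (intro sum.cong) (auto simp: indicator_def dest: atoms_in_unit)
  then show ?thesis unfolding bridge_eq sum_weights by simp
qed

lemma bridge_at_atom:
  assumes i: "i \<in> N" shows "b (u i) = gap_start \<sigma> u i + \<sigma> i"
proof -
  have "(\<Sum>j\<in>N. \<sigma> j * indicator {u j..} (u i)) =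
        (\<Sum>j\<in>N. (if u j < u i then \<sigma> j else 0) + (if j = i then \<sigma> j else 0))"
    using i atoms_eq_iff[OF i] by (intro sum.cong) (auto simp: indicator_def)
  then show ?thesis using i finite_N by (simp add: bridge_eq gap_start_eq sum.distrib)
qed

lemma bridge_below_atom: "x < u i \<Longrightarrow> b x \<le> gap_start \<sigma> u i"
  unfolding bridge_eq gap_start_eq
  by (intro add_mono mult_left_mono sum_mono s0_nonneg) (auto simp: indicator_def weight_nonneg)

lemma gap_start_nonneg: "i \<in> N \<Longrightarrow> 0 \<le> gap_start \<sigma> u i"
  using bridge_below_atom[of 0 i] bridge_0 atoms_in_unit by fastforce

lemma gap_end_le_1: "i \<in> N \<Longrightarrow> gap_start \<sigma> u i + \<sigma> i \<le> 1"
  using bridge_at_atom[of i] bridge_mono[of "u i" 1] bridge_1 atoms_in_unit by force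

lemma isCont_bridge: "z \<notin> u ` N \<Longrightarrow> isCont b z"
  unfolding bridge_eq by (intro continuous_intros) (auto simp: isCont_indicator)

lemma isCont_bridge_minus_jump:
  assumes i: "i \<in> N" shows "isCont (\<lambda>x. b x - \<sigma> i * indicator {u i..} x) (u i)"
proof -
  have "b x - \<sigma> i * indicator {u i..} x = s0 \<sigma> * x + (\<Sum>j\<in>N-{i}. \<sigma> j * indicator {u j..} x)" for x
    using sum.remove[OF finite_N i, of "\<lambda>j. \<sigma> j * indicator {u j..} x"] by (simp add: bridge_eq)
  moreover have "isCont (\<lambda>x. s0 \<sigma> * x + (\<Sum>j\<in>N-{i}. \<sigma> j * indicator {u j..} x)) (u i)"
    using i by (intro continuous_intros) (auto simp: isCont_indicator dest: inj_onD[OF atoms_distinct])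
  ultimately show ?thesis by simp
qed

lemma binv_bounds:
  assumes y: "0 \<le> y" "y < 1"
  shows "0 \<le> binv b y" "binv b y \<le> 1"
    and "\<And>x. 0 \<le> x \<Longrightarrow> x < binv b y \<Longrightarrow> b x \<le> y"
    and "\<And>x. binv b y < x \<Longrightarrow> x \<le> 1 \<Longrightarrow> y < b x"
proof -
  define S where "S = {x\<in>{0..1}. y < b x}"
  have binv: "binv b y = Inf S" by (simp add: binv_def S_def)
  have 1: "1 \<in> S" using y bridge_1 by (simp add: S_def)
  have bdd: "bdd_below S" by (rule bdd_belowI[of _ 0]) (auto simp: S_def)
  show le1: "binv b y \<le> 1" unfolding binv using 1 bdd by (rule cInf_lower)
  show "0 \<le> binv b y" unfolding binv using 1 by (intro cInf_greatest) (auto simp: S_def)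
  show "b x \<le> y" if "0 \<le> x" "x < binv b y" for x
  proof (rule ccontr)
    assume "\<not> b x \<le> y"
    then have "x \<in> S" using that le1 by (auto simp: S_def)
    then show False using cInf_lower[OF _ bdd] that by (force simp: binv)
  qed
  show "y < b x" if x: "binv b y < x" "x \<le> 1" for x
  proof -
    obtain z where "z \<in> S" "z < x" using x cInf_less_iff[OF _ bdd] 1 by (auto simp: binv)
    then show ?thesis using bridge_mono[of z x] by (auto simp: S_def)
  qed
qed

lemma binv_at_atom:
  assumes y: "0 \<le> y" "y < 1" and i: "i \<in> N" and z: "binv b y = u i"
  shows "gap_start \<sigma> u i \<le> y" "y \<le> gap_start \<sigma> u i + \<sigma> i"
proof -
  define g where "g x = b x - \<sigma> i * indicator {u i..} x" for x
  have g: "isCont g (u i)" unfolding g_def by (rule isCont_bridge_minus_jump[OF i])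
  have gu: "g (u i) = gap_start \<sigma> u i" using bridge_at_atom[OF i] by (simp add: g_def)
  have ui: "0 < u i" "u i < 1" using atoms_in_unit i by auto
  have "eventually (\<lambda>x. x \<in> {0<..<u i}) (at_left (u i))"
    using ui by (intro eventually_at_left_real) auto
  then have "eventually (\<lambda>x. g x \<le> y) (at_left (u i))"
    by eventually_elim (use binv_bounds(3)[OF y] z in \<open>auto simp: g_def\<close>)
  with g have "g (u i) \<le> y"
    by (intro tendsto_upperbound) (auto simp: isCont_def filterlim_at_split trivial_limit_at_left_real)
  then show "gap_start \<sigma> u i \<le> y" using gu by simp
  have "eventually (\<lambda>x. x \<in> {u i<..<1}) (at_right (u i))"
    using ui by (intro eventually_at_right_real) auto
  then have "eventually (\<lambda>x. y \<le> g x + \<sigma> i) (at_right (u i))"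
    by eventually_elim (use binv_bounds(4)[OF y] z in \<open>force simp: g_def\<close>)
  moreover have "((\<lambda>x. g x + \<sigma> i) \<longlongrightarrow> g (u i) + \<sigma> i) (at_right (u i))"
    using g by (intro tendsto_intros) (simp add: isCont_def filterlim_at_split)
  ultimately have "y \<le> g (u i) + \<sigma> i"
    by (intro tendsto_lowerbound) (auto simp: trivial_limit_at_right_real)
  then show "y \<le> gap_start \<sigma> u i + \<sigma> i" using gu by simp
qed

lemma bridge_binv:
  assumes y: "0 \<le> y" "y < 1" and z: "binv b y \<notin> u ` N"
  shows "b (binv b y) = y"
proof -
  define w where "w = binv b y"
  have w: "0 \<le> w" "w \<le> 1" using binv_bounds(1,2)[OF y] by (auto simp: w_def)
  have c: "isCont b w" using isCont_bridge z by (simp add: w_def)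
  have "b w \<le> y"
  proof (cases "w = 0")
    case False
    then have "eventually (\<lambda>x. x \<in> {0<..<w}) (at_left w)"
      using w by (intro eventually_at_left_real) auto
    then have "eventually (\<lambda>x. b x \<le> y) (at_left w)"
      by eventually_elim (use binv_bounds(3)[OF y] in \<open>auto simp: w_def\<close>)
    with c show ?thesis
      by (intro tendsto_upperbound) (auto simp: isCont_def filterlim_at_split trivial_limit_at_left_real)
  qed (use bridge_0 y in simp)
  moreover have "y \<le> b w"
  proof (cases "w = 1")
    case False
    then have "eventually (\<lambda>x. x \<in> {w<..<1}) (at_right w)"
      using w by (intro eventually_at_right_real) auto
    then have "eventually (\<lambda>x. y \<le> b x) (at_right w)"
      by eventually_elim (use binv_bounds(4)[OF y] in \<open>force simp: w_def\<close>)
    with c show ?thesis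
      by (intro tendsto_lowerbound) (auto simp: isCont_def filterlim_at_split trivial_limit_at_right_real)
  qed (use bridge_1 y in simp)
  ultimately show ?thesis by (simp add: w_def)
qed

lemma binv_in_gap:
  assumes i: "i \<in> N" and y: "gap_start \<sigma> u i < y" "y < gap_start \<sigma> u i + \<sigma> i"
  shows "binv b y = u i"
  unfolding binv_def
proof (rule cInf_eq_minimum)
  show "u i \<in> {z \<in> {0..1}. y < b z}"
    using atoms_in_unit[of i] i y bridge_at_atom[OF i] by auto
  show "u i \<le> x" if "x \<in> {z \<in> {0..1}. y < b z}" for x
    using that bridge_below_atom[of x i] y by force
qed

lemma gap_not_in_range:
  assumes i: "i \<in> N" and y: "gap_start \<sigma> u i < y" "y < gap_start \<sigma> u i + \<sigma> i"
  shows "y \<notin> b ` {0..1}"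
proof
  assume "y \<in> b ` {0..1}"
  then obtain x where x: "y = b x" by auto
  show False
  proof (cases "x < u i")
    case True then show False using bridge_below_atom[of x i] x y by simp
  next
    case False then show False using bridge_mono[of "u i" x] bridge_at_atom[OF i] x y by simp
  qed
qed

lemma in_range_outside_gaps:
  assumes y: "0 \<le> y" "y \<le> 1"
    and outside: "\<And>i. i \<in> N \<Longrightarrow> \<not> (gap_start \<sigma> u i \<le> y \<and> y \<le> gap_start \<sigma> u i + \<sigma> i)"
  shows "y \<in> b ` {0..1}"
proof (cases "y = 1")
  case True then show ?thesis using bridge_1 by force
next
  case False
  then have y': "0 \<le> y" "y < 1" using y by auto
  have "binv b y \<notin> u ` N" using binv_at_atom[OF y'] outside by blast
  then have "b (binv b y) = y" by (rule bridge_binv[OF y'])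
  with binv_bounds(1,2)[OF y'] show ?thesis by force
qed

lemma hole_union_iff_gaps:
  assumes "y \<notin> gap_ends \<sigma> u"
  shows "y \<in> hole_union b \<longleftrightarrow> y \<in> gaps \<sigma> u"
proof
  assume "y \<in> hole_union b"
  then obtain i where "i \<in> N" "gap_start \<sigma> u i \<le> y" "y \<le> gap_start \<sigma> u i + \<sigma> i"
    using in_range_outside_gaps by (force simp: hole_union_eq)
  then show "y \<in> gaps \<sigma> u" using assms unfolding gaps_def gap_ends_def by force
next
  assume "y \<in> gaps \<sigma> u"
  then obtain i where i: "i \<in> N" "gap_start \<sigma> u i < y" "y < gap_start \<sigma> u i + \<sigma> i"
    unfolding gaps_def by auto
  then show "y \<in> hole_union b"
    using gap_not_in_range[OF i] gap_start_nonneg[of i] gap_end_le_1[of i] by (simp add: hole_union_eq)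
qed

lemma gap_end_le_gap_start:
  assumes i: "i \<in> N" and j: "j \<in> N" and lt: "u i < u j"
  shows "gap_start \<sigma> u i + \<sigma> i \<le> gap_start \<sigma> u j"
proof -
  have "(\<Sum>k\<in>N. if u k < u i then \<sigma> k else 0) + \<sigma> i =
        (\<Sum>k\<in>N. (if u k < u i then \<sigma> k else 0) + (if k = i then \<sigma> k else 0))"
    using i finite_N by (simp add: sum.distrib)
  also have "\<dots> \<le> (\<Sum>k\<in>N. if u k < u j then \<sigma> k else 0)"
    using lt weight_nonneg by (intro sum_mono) auto
  finally show ?thesis
    using mult_left_mono[OF less_imp_le[OF lt] s0_nonneg] by (simp add: gap_start_eq)
qed

lemma gaps_eq_UN: "gaps \<sigma> u = (\<Union>i\<in>N. {gap_start \<sigma> u i<..<gap_start \<sigma> u i + \<sigma> i})"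
  unfolding gaps_def by auto

lemma sets_gaps [measurable]: "gaps \<sigma> u \<in> sets borel"
  unfolding gaps_eq_UN using finite_N by (intro sets.finite_UN) auto

lemma gaps_subset: "gaps \<sigma> u \<subseteq> {0..1}"
  unfolding gaps_def using gap_start_nonneg gap_end_le_1 by fastforce

lemma finite_gap_ends: "finite (gap_ends \<sigma> u)"
proof -
  have "gap_ends \<sigma> u = gap_start \<sigma> u ` N \<union> (\<lambda>i. gap_start \<sigma> u i + \<sigma> i) ` N"
    unfolding gap_ends_def by auto
  then show ?thesis using finite_N by simp
qed

lemma measure_gaps: "measure lborel (gaps \<sigma> u) = 1 - s0 \<sigma>"
proof -
  have "disjoint_family_on (\<lambda>i. {gap_start \<sigma> u i<..<gap_start \<sigma> u i + \<sigma> i}) N"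
    unfolding disjoint_family_on_def
  proof (intro ballI impI)
    fix i j assume ij: "i \<in> N" "j \<in> N" "i \<noteq> j"
    then consider "u i < u j" | "u j < u i" using atoms_eq_iff by fastforce
    then show "{gap_start \<sigma> u i<..<gap_start \<sigma> u i + \<sigma> i} \<inter> {gap_start \<sigma> u j<..<gap_start \<sigma> u j + \<sigma> j} = {}"
      by cases (use gap_end_le_gap_start ij in force)+
  qed
  then have "measure lborel (gaps \<sigma> u) = (\<Sum>i\<in>N. measure lborel {gap_start \<sigma> u i<..<gap_start \<sigma> u i + \<sigma> i})"
    unfolding gaps_eq_UN by (intro measure_finite_Union finite_N) (auto simp: emeasure_lborel_Ioo weight_nonneg)
  then show ?thesis by (simp add: weight_nonneg sum_weights)
qed

end

locale finite_bridge_paintbox = finite_bridge +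
  fixes v :: "nat \<Rightarrow> real"
  assumes v_in_unit: "\<And>j. 0 \<le> v j \<and> v j < 1"
    and equidistributed: "equidistributed v"
begin

definition fibre :: "real \<Rightarrow> real set" where
  "fibre z = {y. 0 \<le> y \<and> y < 1 \<and> binv b y = z}"

definition mass_at :: "real \<Rightarrow> real" where
  "mass_at z = (\<Sum>i | \<sigma> i \<noteq> 0 \<and> u i = z. \<sigma> i)"

lemma mass_at_atom: "i \<in> N \<Longrightarrow> mass_at (u i) = \<sigma> i"
proof -
  assume i: "i \<in> N"
  then have "{j. \<sigma> j \<noteq> 0 \<and> u j = u i} = {i}" using atoms_eq_iff by auto
  then show ?thesis by (simp add: mass_at_def)
qed

lemma mass_at_not_atom: "z \<notin> u ` N \<Longrightarrow> mass_at z = 0"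
  by (auto simp: mass_at_def intro!: sum.neutral)

text \<open>A fibre of \<open>binv b\<close> is the closed gap of an atom, or at most one point.\<close>
lemma emp_freq_fibre: "emp_freq v (fibre z) \<longlonglongrightarrow> mass_at z"
proof (cases "z \<in> u ` N")
  case True
  then obtain i where i: "i \<in> N" "z = u i" by auto
  have "emp_freq v (fibre z) \<longlonglongrightarrow> (gap_start \<sigma> u i + \<sigma> i) - gap_start \<sigma> u i"
  proof (rule equidistributed_emp_freq[OF equidistributed])
    show "{gap_start \<sigma> u i<..<gap_start \<sigma> u i + \<sigma> i} \<subseteq> fibre z"
      using binv_in_gap[OF i(1)] gap_start_nonneg[OF i(1)] gap_end_le_1[OF i(1)] i
      by (force simp: fibre_def)
    show "fibre z \<subseteq> {gap_start \<sigma> u i..gap_start \<sigma> u i + \<sigma> i}"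
      using binv_at_atom[OF _ _ i(1)] i by (auto simp: fibre_def)
  qed (use gap_start_nonneg[OF i(1)] gap_end_le_1[OF i(1)] weight_nonneg[of i] in auto)
  then show ?thesis using mass_at_atom[OF i(1)] i by simp
next
  case False
  have "fibre z \<subseteq> {b z}" using bridge_binv False by (auto simp: fibre_def)
  then consider "fibre z = {}" | "fibre z = {b z}" by blast
  then have "emp_freq v (fibre z) \<longlonglongrightarrow> 0"
  proof cases
    case 1
    then show ?thesis using equidistributed_emp_freq[OF equidistributed, of 0 0] by simp
  next
    case 2
    then have "0 \<le> b z \<and> b z < 1" by (auto simp: fibre_def)
    then show ?thesis using 2 equidistributed_emp_freq[OF equidistributed, of "b z" "b z"] by simp
  qed
  then show ?thesis using mass_at_not_atom[OF False] by simp
qed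

lemma freq_paintbox_block: "freq {j. binv b (v j) = z} = mass_at z"
proof -
  have "{j. binv b (v j) = z} = {j. v j \<in> fibre z}" using v_in_unit by (auto simp: fibre_def)
  then show ?thesis
    using emp_freq_fibre[of z] unfolding freq_def emp_freq_def[abs_def] by (simp add: limI)
qed

lemma binv_hits_atom: "i \<in> N \<Longrightarrow> \<exists>j. binv b (v j) = u i"
proof (rule ccontr)
  assume i: "i \<in> N" and "\<nexists>j. binv b (v j) = u i"
  then have "emp_freq v (fibre (u i)) = (\<lambda>_. 0)" by (auto simp: emp_freq_def fibre_def fun_eq_iff)
  then have "(\<lambda>_. 0) \<longlonglongrightarrow> \<sigma> i" using emp_freq_fibre[of "u i"] mass_at_atom[OF i] by simp
  with i show False using LIMSEQ_unique[OF tendsto_const] by fastforce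
qed

lemma dust_bridge: "dust b v = s0 \<sigma>"
proof -
  define Z where "Z = range (\<lambda>j. binv b (v j))"
  define block where "block z = {j. binv b (v j) = z}" for z
  have blocks: "paintbox_blocks b v = block ` Z"
    unfolding paintbox_blocks_def block_def Z_def by auto
  have "inj_on block Z" by (rule inj_onI) (auto simp: Z_def block_def)
  then have "(\<Sum>\<^sub>\<infinity>B\<in>paintbox_blocks b v. freq B) = (\<Sum>\<^sub>\<infinity>z\<in>Z. freq (block z))"
    unfolding blocks by (simp add: infsum_reindex comp_def)
  also have "\<dots> = (\<Sum>\<^sub>\<infinity>z\<in>Z. mass_at z)"
    by (simp add: block_def freq_paintbox_block)
  also have "\<dots> = (\<Sum>\<^sub>\<infinity>z\<in>u ` N. mass_at z)"
  proof (rule infsum_cong_neutral)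
    fix z assume "z \<in> u ` N - Z"
    then show "mass_at z = 0" using binv_hits_atom by (auto simp: Z_def image_iff) (metis rangeI)
  qed (auto simp: mass_at_not_atom)
  also have "\<dots> = (\<Sum>i\<in>N. \<sigma> i)"
    using finite_N atoms_distinct mass_at_atom by (simp add: sum.reindex)
  finally show ?thesis by (simp add: dust_def sum_weights)
qed

end

section \<open>A strong law for empirical frequencies\<close>

lemma AE_tendsto_if_AE_eventually_dist:
  fixes f :: "nat \<Rightarrow> 'a \<Rightarrow> 'b::metric_space"
  assumes "\<And>\<epsilon>. 0 < \<epsilon> \<Longrightarrow> AE x in M. eventually (\<lambda>n. dist (f n x) l < \<epsilon>) sequentially"
  shows "AE x in M. (\<lambda>n. f n x) \<longlonglongrightarrow> l"
proof -
  have "AE x in M. \<forall>m::nat. eventually (\<lambda>n. dist (f n x) l < inverse (Suc m)) sequentially"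
    using assms by (simp add: AE_all_countable)
  then show ?thesis
  proof eventually_elim
    case (elim x)
    show ?case
    proof (rule tendstoI)
      fix \<epsilon> :: real assume "0 < \<epsilon>"
      then obtain m where "inverse (Suc m) < \<epsilon>" using reals_Archimedean by blast
      with elim[rule_format, of m] show "eventually (\<lambda>n. dist (f n x) l < \<epsilon>) sequentially"
        by (elim eventually_mono) simp
    qed
  qed
qed

text \<open>A strong law of large numbers for indicators: Hoeffding's inequality makes the deviation
  probabilities summable, and Borel--Cantelli concludes.\<close>
lemma (in prob_space) AE_emp_freq_tendsto:
  fixes X :: "'i \<Rightarrow> 'a \<Rightarrow> real" and e :: "nat \<Rightarrow> 'i"
  assumes e: "inj e" and indep: "indep_vars (\<lambda>_. borel) X (range e)"
    and distr_eq: "\<And>j. distr M borel (X (e j)) = distr M borel (X (e 0))"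
    and B[measurable]: "B \<in> sets borel"
  shows "AE \<omega> in M. emp_freq (\<lambda>j. X (e j) \<omega>) B \<longlonglongrightarrow> prob {\<omega>\<in>space M. X (e 0) \<omega> \<in> B}"
proof -
  define Y where "Y i \<omega> = (indicator B (X i \<omega>) :: real)" for i \<omega>
  define p where "p = prob {\<omega>\<in>space M. X (e 0) \<omega> \<in> B}"
  have [measurable]: "X (e j) \<in> borel_measurable M" for j
    using indep by (auto simp: indep_vars_def)
  have indep_Y: "indep_vars (\<lambda>_. borel) Y (range e)"
    unfolding Y_def by (rule indep_vars_compose2[OF indep]) simp
  have distr_Y_via_X: "distr M borel (Y (e j)) = distr (distr M borel (X (e j))) borel (indicator B)" for j
    by (subst distr_distr) (auto simp: comp_def Y_def[abs_def])
  have distr_Y: "distr M borel (Y (e j)) = distr M borel (Y (e 0))" for j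
    using distr_Y_via_X[of j] distr_Y_via_X[of 0] distr_eq[of j] by simp
  have "expectation (Y (e 0)) = expectation (indicator {\<omega>\<in>space M. X (e 0) \<omega> \<in> B})"
    by (intro Bochner_Integration.integral_cong) (auto simp: Y_def indicator_def)
  then have expectation_Y: "expectation (Y (e 0)) = p"
    by (simp add: p_def Int_absorb2)
  have emp_freq_eq: "emp_freq (\<lambda>j. X (e j) \<omega>) B n = (\<Sum>j<n. Y (e j) \<omega>) / n" for \<omega> n
  proof -
    have "(\<Sum>j<n. Y (e j) \<omega>) = (\<Sum>j<n. indicator {j. X (e j) \<omega> \<in> B} j)"
      by (intro sum.cong) (auto simp: Y_def split: split_indicator)
    also have "\<dots> = card ({..<n} \<inter> {j. X (e j) \<omega> \<in> B})"
      by (simp add: indicator_def)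
    finally show ?thesis by (simp add: emp_freq_def Int_commute)
  qed
  have deviation: "prob {\<omega>\<in>space M. \<bar>emp_freq (\<lambda>j. X (e j) \<omega>) B (Suc n) - p\<bar> \<ge> \<epsilon>}
      \<le> 2 * exp (-2 * \<epsilon>\<^sup>2) ^ Suc n" if "0 < \<epsilon>" for \<epsilon> n
  proof -
    interpret H: Hoeffding_ineq_iid M "e ` {..<Suc n}" Y "Y (e 0)" 0 1 "expectation (Y (e 0))"
    proof unfold_locales
      show "indep_vars (\<lambda>_. borel) Y (e ` {..<Suc n})"
        by (rule indep_vars_subset[OF indep_Y]) auto
      show "distr M borel (Y i) = distr M borel (Y (e 0))" if "i \<in> e ` {..<Suc n}" for i
        using that distr_Y by auto
      show "AE \<omega> in M. Y (e 0) \<omega> \<in> {0..1}" by (simp add: Y_def)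
    qed (simp_all add: Y_def[abs_def])
    have card: "card (e ` {..<Suc n}) = Suc n"
      using e by (simp add: card_image inj_on_subset)
    have sum: "(\<Sum>i\<in>e ` {..<Suc n}. Y i \<omega>) = (\<Sum>j<Suc n. Y (e j) \<omega>)" for \<omega>
      using e by (subst sum.reindex) (auto intro: inj_on_subset)
    have "prob {\<omega>\<in>space M. \<bar>emp_freq (\<lambda>j. X (e j) \<omega>) B (Suc n) - p\<bar> \<ge> \<epsilon>}
        \<le> 2 * exp (-2 * real (Suc n) * \<epsilon>\<^sup>2)"
      using H.Hoeffding_ineq_abs_ge'[of \<epsilon>] that
      unfolding card sum by (simp add: emp_freq_eq expectation_Y lessThan_empty_iff)
    also have "\<dots> = 2 * exp (-2 * \<epsilon>\<^sup>2) ^ Suc n"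
      using exp_of_nat_mult[of "Suc n" "-2 * \<epsilon>\<^sup>2"] by (simp add: algebra_simps)
    finally show ?thesis .
  qed
  have "AE \<omega> in M. emp_freq (\<lambda>j. X (e j) \<omega>) B \<longlonglongrightarrow> p"
  proof (rule AE_tendsto_if_AE_eventually_dist[where f = "\<lambda>n \<omega>. emp_freq (\<lambda>j. X (e j) \<omega>) B n"])
    fix \<epsilon> :: real assume "0 < \<epsilon>"
    define A where "A n = {\<omega>\<in>space M. \<bar>emp_freq (\<lambda>j. X (e j) \<omega>) B (Suc n) - p\<bar> \<ge> \<epsilon>}" for n
    have [measurable]: "A n \<in> sets M" for n
      unfolding A_def emp_freq_eq Y_def by measurable
    have "summable (\<lambda>n. 2 * exp (-2 * \<epsilon>\<^sup>2) ^ Suc n)"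
      using \<open>0 < \<epsilon>\<close> by (intro summable_mult summable_ignore_initial_segment[where k=1, simplified]
          summable_geometric) auto
    then have "summable (\<lambda>n. measure M (A n))"
      by (rule summable_comparison_test') (use deviation[OF \<open>0 < \<epsilon>\<close>] in \<open>simp add: A_def\<close>)
    then have "AE \<omega> in M. eventually (\<lambda>n. \<omega> \<in> space M - A n) sequentially"
      by (intro borel_cantelli_AE1) (auto simp: emeasure_finite less_top[symmetric])
    with AE_space show "AE \<omega> in M. eventually (\<lambda>n. dist (emp_freq (\<lambda>j. X (e j) \<omega>) B n) p < \<epsilon>) sequentially"
    proof eventually_elim
      case (elim \<omega>)
      then have "eventually (\<lambda>n. dist (emp_freq (\<lambda>j. X (e j) \<omega>) B (Suc n)) p < \<epsilon>) sequentially"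
        by (elim eventually_mono) (auto simp: A_def dist_real_def)
      then show ?case by (rule eventually_sequentially_Suc[THEN iffD1])
    qed
  qed
  then show ?thesis by (simp add: p_def)
qed

section \<open>Splitting a uniform variable at the dust\<close>

abbreviation SN :: "(nat \<Rightarrow> real) measure" where
  "SN \<equiv> PiM UNIV (\<lambda>_. borel)"

lemma measurable_gap_start [measurable (raw)]:
  assumes [measurable]: "f \<in> M \<rightarrow>\<^sub>M SN" "g \<in> M \<rightarrow>\<^sub>M SN"
  shows "(\<lambda>x. gap_start (f x) (g x) i) \<in> borel_measurable M"
  unfolding gap_start_def by measurable

lemma measurable_gaps [measurable (raw)]:
  assumes [measurable]: "f \<in> M \<rightarrow>\<^sub>M SN" "g \<in> M \<rightarrow>\<^sub>M SN" "h \<in> borel_measurable M"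
  shows "Measurable.pred M (\<lambda>x. h x \<in> gaps (f x) (g x))"
  unfolding gaps_def by measurable

lemma measurable_gap_ends [measurable (raw)]:
  assumes [measurable]: "f \<in> M \<rightarrow>\<^sub>M SN" "g \<in> M \<rightarrow>\<^sub>M SN" "h \<in> borel_measurable M"
  shows "Measurable.pred M (\<lambda>x. h x \<in> gap_ends (f x) (g x))"
  unfolding gap_ends_def by measurable

abbreviation U01 :: "real measure" where
  "U01 \<equiv> uniform_measure lborel {0..1}"

interpretation U01: prob_space U01
  by (rule prob_space_uniform_measure) auto

lemma measure_U01: "A \<in> sets borel \<Longrightarrow> measure U01 A = measure lborel ({0..1} \<inter> A)"
  by (simp add: measure_def divide_ennreal_def)

lemma measure_U01_atMost: "measure U01 {..x} = max 0 (min 1 x)"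
proof -
  have "{0..1} \<inter> {..x} = (if x < 0 then {} else {0..min 1 x})" by auto
  then show ?thesis by (simp add: measure_U01)
qed

lemma AE_U01_in_open: "AE x in U01. 0 < x \<and> x < 1"
proof (rule AE_uniform_measureI)
  have "AE x in lborel. x \<notin> {0, 1::real}"
    by (intro AE_not_in countable_imp_null_set_lborel) auto
  then show "AE x in lborel. x \<in> {0..1} \<longrightarrow> 0 < x \<and> x < (1::real)"
    by eventually_elim (auto simp: less_le)
qed simp

lemma AE_U01_not_in_countable: "countable A \<Longrightarrow> AE x in U01. x \<notin> A"
  by (intro AE_uniform_measureI eventually_mono[OF AE_not_in[OF countable_imp_null_set_lborel]]) auto

lemma scaled_measure_U01_affine:
  assumes "0 \<le> c"
  shows "c * measure U01 {w. a + c * w \<le> t} = max 0 (min c (t - a))"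
proof (cases "c = 0")
  case False
  then have "{w. a + c * w \<le> t} = {..(t - a) / c}"
    using assms by (auto simp: field_simps)
  then show ?thesis
    using False assms by (auto simp: measure_U01_atMost max_def min_def field_simps)
qed simp

definition split_uniform :: "(nat \<Rightarrow> real) \<Rightarrow> (nat \<Rightarrow> real) \<Rightarrow> real \<Rightarrow> real \<Rightarrow> real" where
  "split_uniform \<sigma> u v w =
     (if v \<in> gaps \<sigma> u then 1 - suminf \<sigma> + suminf \<sigma> * w else (1 - suminf \<sigma>) * w)"

lemma measurable_split_uniform [measurable (raw)]:
  assumes [measurable]: "f \<in> M \<rightarrow>\<^sub>M SN" "g \<in> M \<rightarrow>\<^sub>M SN" "h \<in> borel_measurable M" "k \<in> borel_measurable M"
  shows "(\<lambda>x. split_uniform (f x) (g x) (h x) (k x)) \<in> borel_measurable M"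
  unfolding split_uniform_def by measurable

context finite_bridge
begin

lemma split_uniform_eq:
  "split_uniform \<sigma> u v w = (if v \<in> gaps \<sigma> u then s0 \<sigma> + (1 - s0 \<sigma>) * w else s0 \<sigma> * w)"
  by (simp add: split_uniform_def suminf_weights)

lemma measure_U01_gaps: "measure U01 (gaps \<sigma> u) = 1 - s0 \<sigma>"
  using gaps_subset measure_gaps by (simp add: measure_U01 Int_absorb1)

lemma measure_U01_not_gaps: "measure U01 (- gaps \<sigma> u) = s0 \<sigma>"
  using U01.prob_compl[of "gaps \<sigma> u"] measure_U01_gaps by (simp add: Compl_eq_Diff_UNIV)

lemma emeasure_split_uniform_le:
  "emeasure (U01 \<Otimes>\<^sub>M U01) {p. split_uniform \<sigma> u (fst p) (snd p) \<le> t} = ennreal (max 0 (min 1 t))"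
proof -
  interpret P: pair_prob_space U01 U01 ..
  define s where "s = s0 \<sigma>"
  have s: "0 \<le> s" "s \<le> 1" using s0_nonneg s0_le_1 by (auto simp: s_def)
  define B1 where "B1 = {w. s + (1 - s) * w \<le> t}"
  define B2 where "B2 = {w. s * w \<le> t}"
  have [measurable]: "B1 \<in> sets borel" "B2 \<in> sets borel"
    unfolding B1_def B2_def by measurable
  have "{p. split_uniform \<sigma> u (fst p) (snd p) \<le> t} = gaps \<sigma> u \<times> B1 \<union> (- gaps \<sigma> u) \<times> B2"
    by (auto simp: split_uniform_eq B1_def B2_def s_def)
  also have "emeasure (U01 \<Otimes>\<^sub>M U01) \<dots> =
      emeasure (U01 \<Otimes>\<^sub>M U01) (gaps \<sigma> u \<times> B1) + emeasure (U01 \<Otimes>\<^sub>M U01) ((- gaps \<sigma> u) \<times> B2)"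
    by (intro plus_emeasure[symmetric]) auto
  also have "\<dots> = ennreal (measure U01 (gaps \<sigma> u) * measure U01 B1 + measure U01 (- gaps \<sigma> u) * measure U01 B2)"
    by (simp add: U01.emeasure_pair_measure_Times U01.emeasure_eq_measure ennreal_mult ennreal_plus)
  also have "\<dots> = ennreal (max 0 (min (1 - s) (t - s)) + max 0 (min s t))"
    unfolding measure_U01_gaps measure_U01_not_gaps B1_def B2_def s_def[symmetric]
    using s scaled_measure_U01_affine[of "1 - s" s t] scaled_measure_U01_affine[of s 0 t] by simp
  also have "\<dots> = ennreal (max 0 (min 1 t))"
    using s by (intro arg_cong[where f = ennreal]) (auto simp: max_def min_def)
  finally show ?thesis .
qed

lemma AE_U01_not_gap_end: "AE v in U01. v \<notin> gap_ends \<sigma> u"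
  using finite_gap_ends by (intro AE_U01_not_in_countable countable_finite)

lemma AE_U01_gaps_if_s0_eq_0: "s0 \<sigma> = 0 \<Longrightarrow> AE v in U01. v \<in> gaps \<sigma> u"
  using measure_U01_gaps by (intro U01.AE_prob_1) simp


lemma AE_U01_typical: "AE v in U01. v \<notin> gap_ends \<sigma> u \<and> (suminf \<sigma> = 1 \<longrightarrow> v \<in> gaps \<sigma> u)"
  using AE_U01_not_gap_end AE_U01_gaps_if_s0_eq_0
  by (cases "s0 \<sigma> = 0") (auto simp: suminf_weights elim: eventually_mono)

end

section \<open>The random finite bridge\<close>

text \<open>\<open>indep_var\<close> requires both variables to take values in the same type; here they do not.\<close>
lemma (in prob_space) distr_Pair_eq_pair_measure:
  assumes [measurable]: "X \<in> M \<rightarrow>\<^sub>M S" "Y \<in> M \<rightarrow>\<^sub>M T"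
    and indep: "\<And>A B. A \<in> sets S \<Longrightarrow> B \<in> sets T \<Longrightarrow>
      prob (X -` A \<inter> space M \<inter> (Y -` B \<inter> space M)) = prob (X -` A \<inter> space M) * prob (Y -` B \<inter> space M)"
  shows "distr M (S \<Otimes>\<^sub>M T) (\<lambda>\<omega>. (X \<omega>, Y \<omega>)) = distr M S X \<Otimes>\<^sub>M distr M T Y"
proof -
  interpret X: prob_space "distr M S X" by (rule prob_space_distr) simp
  interpret Y: prob_space "distr M T Y" by (rule prob_space_distr) simp
  interpret XY: pair_prob_space "distr M S X" "distr M T Y" ..
  show ?thesis
  proof (rule pair_measure_eqI[symmetric])
    fix A B assume "A \<in> sets (distr M S X)" "B \<in> sets (distr M T Y)"
    then have [measurable]: "A \<in> sets S" "B \<in> sets T" by simp_all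
    have "emeasure (distr M (S \<Otimes>\<^sub>M T) (\<lambda>\<omega>. (X \<omega>, Y \<omega>))) (A \<times> B) =
        emeasure M (X -` A \<inter> space M \<inter> (Y -` B \<inter> space M))"
      by (subst emeasure_distr) (auto intro!: arg_cong[where f = "emeasure M"])
    also have "\<dots> = emeasure M (X -` A \<inter> space M) * emeasure M (Y -` B \<inter> space M)"
      using indep[of A B] by (simp add: emeasure_eq_measure ennreal_mult)
    finally show "emeasure (distr M S X) A * emeasure (distr M T Y) B =
        emeasure (distr M (S \<Otimes>\<^sub>M T) (\<lambda>\<omega>. (X \<omega>, Y \<omega>))) (A \<times> B)"
      by (simp add: emeasure_distr)
  qed (auto intro: X.sigma_finite_measure_axioms Y.sigma_finite_measure_axioms)
qed

lemma (in prob_space) emeasure_Pair_eq_nn_integral: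
  assumes [measurable]: "X \<in> M \<rightarrow>\<^sub>M S" "Y \<in> M \<rightarrow>\<^sub>M T"
    and product: "distr M (S \<Otimes>\<^sub>M T) (\<lambda>\<omega>. (X \<omega>, Y \<omega>)) = distr M S X \<Otimes>\<^sub>M distr M T Y"
    and A: "A \<in> sets (S \<Otimes>\<^sub>M T)"
  shows "emeasure M {\<omega>\<in>space M. (X \<omega>, Y \<omega>) \<in> A} =
    (\<integral>\<^sup>+\<omega>. emeasure (distr M T Y) (Pair (X \<omega>) -` A) \<partial>M)"
proof -
  interpret Y: prob_space "distr M T Y" by (rule prob_space_distr) simp
  have A': "A \<in> sets (distr M S X \<Otimes>\<^sub>M distr M T Y)" using A by simp
  have "emeasure M {\<omega>\<in>space M. (X \<omega>, Y \<omega>) \<in> A} = emeasure (distr M (S \<Otimes>\<^sub>M T) (\<lambda>\<omega>. (X \<omega>, Y \<omega>))) A"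
    using A by (subst emeasure_distr) (auto simp: vimage_def Int_def conj_commute)
  also have "\<dots> = (\<integral>\<^sup>+x. emeasure (distr M T Y) (Pair x -` A) \<partial>distr M S X)"
    unfolding product by (rule Y.emeasure_pair_measure_alt[OF A'])
  also have "\<dots> = (\<integral>\<^sup>+\<omega>. emeasure (distr M T Y) (Pair (X \<omega>) -` A) \<partial>M)"
    using Y.measurable_emeasure_Pair[OF A'] by (intro nn_integral_distr) simp_all
  finally show ?thesis .
qed

lemma (in prob_space) AE_in_open_if_distr_U01:
  assumes [measurable]: "X \<in> borel_measurable M" and "distr M borel X = U01"
  shows "AE \<omega> in M. 0 < X \<omega> \<and> X \<omega> < 1"
  using AE_U01_in_open by (subst (asm) assms(2)[symmetric]) (simp add: AE_distr_iff)

abbreviation TR :: "(ridx \<Rightarrow> real) measure" where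
  "TR \<equiv> PiM UNIV (\<lambda>_. borel)"

abbreviation P4 :: "((nat \<Rightarrow> real) \<times> (nat \<Rightarrow> real) \<times> real \<times> real) measure" where
  "P4 \<equiv> SN \<Otimes>\<^sub>M SN \<Otimes>\<^sub>M borel \<Otimes>\<^sub>M borel"

lemma measurable_reindex_UI [measurable (raw)]:
  "f \<in> M \<rightarrow>\<^sub>M TR \<Longrightarrow> (\<lambda>x k. f x (UI k)) \<in> M \<rightarrow>\<^sub>M SN"
  by (rule measurable_PiM_single') auto

lemma space_PiM_UNIV_borel [simp]: "space (PiM UNIV (\<lambda>_. borel :: 'b::topological_space measure)) = UNIV"
  by (simp add: space_PiM PiE_UNIV_domain)

lemma space_P4 [simp]: "space P4 = UNIV"
  by (simp add: space_pair_measure)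

locale random_finite_bridge = prob_space M for M :: "'a measure" +
  fixes s :: "'a \<Rightarrow> nat \<Rightarrow> real" and Us Vs :: "nat \<Rightarrow> 'a \<Rightarrow> real" and V :: "'a \<Rightarrow> real"
  assumes s_measurable: "s \<in> M \<rightarrow>\<^sub>M SN"
    and partition: "\<forall>\<omega>\<in>space M. finite_ranked_partition (s \<omega>)"
    and distr_Us: "\<And>k. distr M borel (Us k) = U01"
    and distr_Vs: "\<And>k. distr M borel (Vs k) = U01"
    and distr_V: "distr M borel V = U01"
    and indep_rvfam: "indep_vars (\<lambda>_. borel) (rvfam Us Vs V) UNIV"
    and indep_s_rvfam: "indep_set {s -` A \<inter> space M | A. A \<in> sets SN}
      {(\<lambda>\<omega> i. rvfam Us Vs V i \<omega>) -` A \<inter> space M | A. A \<in> sets TR}"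
begin

abbreviation "R \<equiv> \<lambda>\<omega> i. rvfam Us Vs V i \<omega>"
abbreviation "Uvec \<equiv> \<lambda>\<omega> k. Us k \<omega>"

lemma rvfam_simps [simp]:
  "rvfam Us Vs V (UI k) = Us k" "rvfam Us Vs V (VI k) = Vs k" "rvfam Us Vs V VV = V"
  by (simp_all add: rvfam_def)

lemma measurable_rvfam [measurable]: "rvfam Us Vs V i \<in> borel_measurable M"
  using indep_rvfam by (auto simp: indep_vars_def)

lemma measurable_vars [measurable]:
  "Us k \<in> borel_measurable M" "Vs k \<in> borel_measurable M" "V \<in> borel_measurable M"
  using measurable_rvfam[of "UI k"] measurable_rvfam[of "VI k"] measurable_rvfam[of VV] by simp_all

lemma measurable_vectors [measurable]:
  "s \<in> M \<rightarrow>\<^sub>M SN" "Uvec \<in> M \<rightarrow>\<^sub>M SN" "R \<in> M \<rightarrow>\<^sub>M TR"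
  using s_measurable by (auto intro!: measurable_PiM_single')

lemma indep_var_rvfam: "i \<noteq> j \<Longrightarrow> indep_var borel (rvfam Us Vs V i) borel (rvfam Us Vs V j)"
  using indep_var_compose[OF indep_var_restrict[OF indep_rvfam, of "{i}" "{j}"],
      of "\<lambda>f. f i" borel "\<lambda>f. f j" borel]
  by (simp add: comp_def measurable_component_singleton)

lemma distr_V_Vs0: "distr M (borel \<Otimes>\<^sub>M borel) (\<lambda>\<omega>. (V \<omega>, Vs 0 \<omega>)) = U01 \<Otimes>\<^sub>M U01"
  using indep_var_rvfam[of VV "VI 0"] by (simp add: indep_var_distribution_eq distr_V distr_Vs)

lemma AE_Us_distinct: "i \<noteq> j \<Longrightarrow> AE \<omega> in M. Us i \<omega> \<noteq> Us j \<omega>"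
proof -
  assume "i \<noteq> j"
  then have "distr M (borel \<Otimes>\<^sub>M borel) (\<lambda>\<omega>. (Us i \<omega>, Us j \<omega>)) = U01 \<Otimes>\<^sub>M U01"
    using indep_var_rvfam[of "UI i" "UI j"] by (simp add: indep_var_distribution_eq distr_Us)
  moreover interpret P: pair_prob_space U01 U01 ..
  have "AE p in U01 \<Otimes>\<^sub>M U01. fst p \<noteq> snd p"
  proof (rule P.AE_pair_measure)
    show "{p \<in> space (U01 \<Otimes>\<^sub>M U01). fst p \<noteq> snd p} \<in> sets (U01 \<Otimes>\<^sub>M U01)"
      by measurable
    show "AE x in U01. AE y in U01. fst (x, y) \<noteq> snd (x, y)"
    proof (rule AE_I2)
      fix x show "AE y in U01. fst (x, y) \<noteq> snd (x, y)"
        using AE_U01_not_in_countable[of "{x}"] by (auto elim: eventually_mono)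
    qed
  qed
  ultimately have "AE p in distr M (borel \<Otimes>\<^sub>M borel) (\<lambda>\<omega>. (Us i \<omega>, Us j \<omega>)). fst p \<noteq> snd p"
    by (simp only:)
  then show ?thesis by (subst (asm) AE_distr_iff) auto
qed

definition good_atoms :: "'a \<Rightarrow> bool" where
  "good_atoms \<omega> \<longleftrightarrow> inj (Uvec \<omega>) \<and> (\<forall>k. 0 < Us k \<omega> \<and> Us k \<omega> < 1)"

lemma AE_good_atoms: "AE \<omega> in M. good_atoms \<omega>"
proof -
  have "AE \<omega> in M. \<forall>i j. i \<noteq> j \<longrightarrow> Us i \<omega> \<noteq> Us j \<omega>"
    using AE_Us_distinct by (simp add: AE_all_countable)
  moreover have "AE \<omega> in M. \<forall>k. 0 < Us k \<omega> \<and> Us k \<omega> < 1"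
    using AE_in_open_if_distr_U01[OF _ distr_Us] by (simp add: AE_all_countable)
  ultimately show ?thesis
    unfolding good_atoms_def by eventually_elim (auto simp: inj_def)
qed

lemma finite_bridge_sample: "\<omega> \<in> space M \<Longrightarrow> good_atoms \<omega>' \<Longrightarrow> finite_bridge (s \<omega>) (Uvec \<omega>')"
  using partition by (auto simp: finite_bridge_def good_atoms_def intro: inj_on_subset)

lemma AE_equidistributed_Vs: "AE \<omega> in M. equidistributed (\<lambda>k. Vs k \<omega>)"
proof -
  have "AE \<omega> in M. emp_freq (\<lambda>k. Vs k \<omega>) {p..q} \<longlonglongrightarrow> measure lborel ({p..q} \<inter> {0..1})" for p q
  proof -
    have "prob {\<omega>\<in>space M. Vs 0 \<omega> \<in> {p..q}} = measure (distr M borel (Vs 0)) {p..q}"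
      by (subst measure_distr) (auto simp: vimage_def Int_def conj_commute)
    also have "\<dots> = measure lborel ({p..q} \<inter> {0..1})"
      by (simp add: distr_Vs measure_U01 Int_commute)
    finally show ?thesis
      using AE_emp_freq_tendsto[of VI "rvfam Us Vs V" "{p..q}"] indep_vars_subset[OF indep_rvfam]
      by (simp add: inj_def distr_Vs)
  qed
  then show ?thesis
    by (simp add: equidistributed_def AE_ball_countable countable_rat)
qed

lemma distr_s_R: "distr M (SN \<Otimes>\<^sub>M TR) (\<lambda>\<omega>. (s \<omega>, R \<omega>)) = distr M SN s \<Otimes>\<^sub>M distr M TR R"
  by (rule distr_Pair_eq_pair_measure) (auto intro: indep_setD[OF indep_s_rvfam])

lemma distr_Uvec_V_Vs0:
  "distr M (SN \<Otimes>\<^sub>M (borel \<Otimes>\<^sub>M borel)) (\<lambda>\<omega>. (Uvec \<omega>, V \<omega>, Vs 0 \<omega>)) =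
    distr M SN Uvec \<Otimes>\<^sub>M (U01 \<Otimes>\<^sub>M U01)"
  unfolding distr_V_Vs0[symmetric]
proof (rule distr_Pair_eq_pair_measure)
  define X where "X \<omega> = restrict (R \<omega>) (range UI)" for \<omega>
  define Y where "Y \<omega> = restrict (R \<omega>) {VV, VI 0}" for \<omega>
  have XY: "indep_var (PiM (range UI) (\<lambda>_. borel)) X (PiM {VV, VI 0} (\<lambda>_. borel)) Y"
    unfolding X_def Y_def by (rule indep_var_restrict[OF indep_rvfam]) auto
  fix A :: "(nat \<Rightarrow> real) set" and B :: "(real \<times> real) set"
  assume A: "A \<in> sets SN" and B: "B \<in> sets (borel \<Otimes>\<^sub>M borel)"
  define A' where "A' = (\<lambda>f k. f (UI k)) -` A \<inter> space (PiM (range UI) (\<lambda>_. borel :: real measure))"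
  define B' where "B' = (\<lambda>f. (f VV, f (VI 0))) -` B \<inter> space (PiM {VV, VI 0} (\<lambda>_. borel :: real measure))"
  have A': "A' \<in> sets (PiM (range UI) (\<lambda>_. borel))"
    unfolding A'_def using A by (intro measurable_sets[OF measurable_PiM_single'])
      (auto intro: measurable_component_singleton)
  have B': "B' \<in> sets (PiM {VV, VI 0} (\<lambda>_. borel))"
    unfolding B'_def using B by (intro measurable_sets[OF measurable_Pair])
      (auto intro: measurable_component_singleton)
  have "Uvec -` A \<inter> space M = X -` A' \<inter> space M"
    using measurable_space[OF indep_var_rv1[OF XY]] by (auto simp: A'_def X_def)
  moreover have "(\<lambda>\<omega>. (V \<omega>, Vs 0 \<omega>)) -` B \<inter> space M = Y -` B' \<inter> space M"
    using measurable_space[OF indep_var_rv2[OF XY]] by (auto simp: B'_def Y_def)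
  moreover have "(\<lambda>\<omega>. (X \<omega>, Y \<omega>)) -` (A' \<times> B') \<inter> space M = X -` A' \<inter> space M \<inter> (Y -` B' \<inter> space M)"
    by auto
  ultimately show "prob (Uvec -` A \<inter> space M \<inter> ((\<lambda>\<omega>. (V \<omega>, Vs 0 \<omega>)) -` B \<inter> space M)) =
      prob (Uvec -` A \<inter> space M) * prob ((\<lambda>\<omega>. (V \<omega>, Vs 0 \<omega>)) -` B \<inter> space M)"
    using indep_varD[OF XY A' B'] by simp
qed simp_all


definition sample :: "'a \<Rightarrow> (nat \<Rightarrow> real) \<times> (nat \<Rightarrow> real) \<times> real \<times> real" where
  "sample \<omega> = (s \<omega>, Uvec \<omega>, V \<omega>, Vs 0 \<omega>)"

lemma measurable_sample [measurable]: "sample \<in> M \<rightarrow>\<^sub>M P4"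
  unfolding sample_def by measurable

text \<open>Conditioning first on \<open>s\<close> and then on the atom positions, both of which are independent of
  the rest, reduces a probability about the sample to one under \<open>U01 \<Otimes> U01\<close> for a fixed finite bridge.\<close>
lemma emeasure_sample_const:
  assumes A [measurable]: "A \<in> sets P4"
    and c: "\<And>\<sigma> u. finite_bridge \<sigma> u \<Longrightarrow> emeasure (U01 \<Otimes>\<^sub>M U01) {p. (\<sigma>, u, p) \<in> A} = c"
  shows "emeasure M {\<omega>\<in>space M. sample \<omega> \<in> A} = c"
proof -
  define A' where "A' = {x\<in>space (SN \<Otimes>\<^sub>M TR). (fst x, (\<lambda>k. snd x (UI k)), snd x VV, snd x (VI 0)) \<in> A}"
  have A' [measurable]: "A' \<in> sets (SN \<Otimes>\<^sub>M TR)"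
    unfolding A'_def by measurable
  have given_s: "emeasure (distr M TR R) (Pair (s \<omega>) -` A') = c" if \<omega>: "\<omega> \<in> space M" for \<omega>
  proof -
    have "Pair (s \<omega>) -` A' \<in> sets TR" using A' by (rule sets_Pair1)
    then have "emeasure (distr M TR R) (Pair (s \<omega>) -` A') = emeasure M (R -` Pair (s \<omega>) -` A' \<inter> space M)"
      by (simp add: emeasure_distr)
    also have "R -` Pair (s \<omega>) -` A' \<inter> space M = {\<omega>'\<in>space M. (Uvec \<omega>', V \<omega>', Vs 0 \<omega>') \<in> Pair (s \<omega>) -` A}"
      by (auto simp: A'_def space_pair_measure)
    also have "emeasure M \<dots> = (\<integral>\<^sup>+\<omega>'. emeasure (U01 \<Otimes>\<^sub>M U01) (Pair (Uvec \<omega>') -` Pair (s \<omega>) -` A) \<partial>M)"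
      using emeasure_Pair_eq_nn_integral[OF _ _ distr_Uvec_V_Vs0[folded distr_V_Vs0], of "Pair (s \<omega>) -` A"]
      by (simp add: sets_Pair1 distr_V_Vs0)
    also have "\<dots> = (\<integral>\<^sup>+\<omega>'. c \<partial>M)"
      using AE_good_atoms AE_space
      by (intro nn_integral_cong_AE) (auto simp: vimage_def intro: c finite_bridge_sample[OF \<omega>] elim!: eventually_mono)
    finally show ?thesis by (simp add: emeasure_space_1)
  qed
  have "{\<omega>\<in>space M. sample \<omega> \<in> A} = {\<omega>\<in>space M. (s \<omega>, R \<omega>) \<in> A'}"
    using measurable_space[OF measurable_vectors(1)] measurable_space[OF measurable_vectors(3)]
    by (auto simp: sample_def A'_def space_pair_measure)
  also have "emeasure M \<dots> = (\<integral>\<^sup>+\<omega>. emeasure (distr M TR R) (Pair (s \<omega>) -` A') \<partial>M)"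
    by (rule emeasure_Pair_eq_nn_integral[OF _ _ distr_s_R A']) simp_all
  also have "\<dots> = (\<integral>\<^sup>+\<omega>. c \<partial>M)"
    by (intro nn_integral_cong given_s)
  finally show ?thesis by (simp add: emeasure_space_1)
qed

lemma AE_sample:
  assumes [measurable]: "Measurable.pred P4 P"
    and AE: "\<And>\<sigma> u. finite_bridge \<sigma> u \<Longrightarrow> AE p in U01 \<Otimes>\<^sub>M U01. P (\<sigma>, u, p)"
  shows "AE \<omega> in M. P (sample \<omega>)"
proof -
  have "emeasure M {\<omega>\<in>space M. sample \<omega> \<in> {x\<in>space P4. \<not> P x}} = 0"
  proof (rule emeasure_sample_const)
    fix \<sigma> u assume "finite_bridge \<sigma> u"
    then have "AE p in U01 \<Otimes>\<^sub>M U01. P (\<sigma>, u, p)" by (rule AE)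
    moreover have "{p\<in>space (U01 \<Otimes>\<^sub>M U01). \<not> P (\<sigma>, u, p)} \<in> sets (U01 \<Otimes>\<^sub>M U01)"
      by measurable
    ultimately show "emeasure (U01 \<Otimes>\<^sub>M U01) {p. (\<sigma>, u, p) \<in> {x\<in>space P4. \<not> P x}} = 0"
      by (subst (asm) AE_iff_measurable[OF _ refl]) (simp_all add: space_pair_measure)
  qed measurable
  then show ?thesis
    by (subst AE_iff_measurable[OF _ refl]) auto
qed

definition U :: "'a \<Rightarrow> real" where
  "U \<omega> = split_uniform (s \<omega>) (Uvec \<omega>) (V \<omega>) (Vs 0 \<omega>)"

lemma measurable_U [measurable]: "U \<in> borel_measurable M"
  unfolding U_def by measurable

lemma distr_U: "distr M borel U = U01"
proof (rule cdf_unique)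
  show "real_distribution (distr M borel U)" "real_distribution U01"
    by (auto simp: real_distribution_def real_distribution_axioms_def prob_space_distr
        U01.prob_space_axioms)
  show "cdf (distr M borel U) = cdf U01"
  proof
    fix t
    define A where "A = {x\<in>space P4. split_uniform (fst x) (fst (snd x)) (fst (snd (snd x))) (snd (snd (snd x))) \<le> t}"
    have "emeasure M {\<omega>\<in>space M. sample \<omega> \<in> A} = ennreal (max 0 (min 1 t))"
    proof (rule emeasure_sample_const)
      show "A \<in> sets P4" unfolding A_def by measurable
    qed (simp add: A_def space_pair_measure finite_bridge.emeasure_split_uniform_le)
    moreover have "{\<omega>\<in>space M. sample \<omega> \<in> A} = U -` {..t} \<inter> space M"
      by (auto simp: A_def sample_def U_def)
    ultimately have "ennreal (measure M (U -` {..t} \<inter> space M)) = ennreal (max 0 (min 1 t))"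
      by (simp only: emeasure_eq_measure)
    then have "measure M (U -` {..t} \<inter> space M) = max 0 (min 1 t)"
      by (subst (asm) ennreal_inj) auto
    then show "cdf (distr M borel U) t = cdf U01 t"
      by (simp add: cdf_def measure_distr measure_U01_atMost)
  qed
qed

lemma AE_U_less_dust_iff:
  "AE \<omega> in M. U \<omega> < dust (bridge (s \<omega>) (Uvec \<omega>)) (\<lambda>k. Vs k \<omega>)
      \<longleftrightarrow> V \<omega> \<notin> hole_union (bridge (s \<omega>) (Uvec \<omega>))"
proof -
  have "AE \<omega> in M. V \<omega> \<notin> gap_ends (s \<omega>) (Uvec \<omega>) \<and> (suminf (s \<omega>) = 1 \<longrightarrow> V \<omega> \<in> gaps (s \<omega>) (Uvec \<omega>))"
  proof -
    define typical where "typical x \<longleftrightarrow> fst (snd (snd x)) \<notin> gap_ends (fst x) (fst (snd x)) \<and>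
        (suminf (fst x) = 1 \<longrightarrow> fst (snd (snd x)) \<in> gaps (fst x) (fst (snd x)))" for x :: "(nat \<Rightarrow> real) \<times> (nat \<Rightarrow> real) \<times> real \<times> real"
    have typical [measurable]: "Measurable.pred P4 typical" unfolding typical_def by measurable
    have "AE \<omega> in M. typical (sample \<omega>)"
    proof (rule AE_sample)
      fix \<sigma> u assume "finite_bridge \<sigma> u"
      interpret P: pair_prob_space U01 U01 ..
      show "AE p in U01 \<Otimes>\<^sub>M U01. typical (\<sigma>, u, p)"
      proof (rule P.AE_pair_measure)
        show "{p \<in> space (U01 \<Otimes>\<^sub>M U01). typical (\<sigma>, u, p)} \<in> sets (U01 \<Otimes>\<^sub>M U01)"
        proof -
          have "(\<lambda>p. (\<sigma>, u, p)) \<in> U01 \<Otimes>\<^sub>M U01 \<rightarrow>\<^sub>M P4" by measurable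
          from measurable_compose[OF this typical] show ?thesis by (simp add: pred_def)
        qed
        show "AE x in U01. AE y in U01. typical (\<sigma>, u, x, y)"
          using finite_bridge.AE_U01_typical[OF \<open>finite_bridge \<sigma> u\<close>]
          by (rule eventually_mono) (simp add: typical_def)
      qed
    qed measurable
    then show ?thesis by (simp add: sample_def typical_def)
  qed
  moreover have "AE \<omega> in M. \<forall>k. 0 < Vs k \<omega> \<and> Vs k \<omega> < 1"
    by (intro AE_all_countable[THEN iffD2] allI AE_in_open_if_distr_U01[OF _ distr_Vs]) simp
  then have "AE \<omega> in M. \<forall>k. 0 \<le> Vs k \<omega> \<and> Vs k \<omega> < 1"
    by (elim eventually_mono) (auto intro: less_imp_le)
  ultimately show ?thesis
    using AE_good_atoms AE_equidistributed_Vs AE_space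
  proof eventually_elim
    case (elim \<omega>)
    interpret finite_bridge_paintbox "s \<omega>" "Uvec \<omega>" "\<lambda>k. Vs k \<omega>"
      using finite_bridge_sample[OF elim(5,3)] elim(2,4)
      by (simp add: finite_bridge_paintbox_def finite_bridge_paintbox_axioms_def)
    have "0 \<le> (1 - s0 (s \<omega>)) * Vs 0 \<omega>" "s0 (s \<omega>) \<noteq> 0 \<Longrightarrow> s0 (s \<omega>) * Vs 0 \<omega> < s0 (s \<omega>)"
      using elim(2) s0_nonneg s0_le_1 by (auto simp: mult_less_cancel_left1)
    then show ?case
      using elim(1)
      by (auto simp: U_def split_uniform_eq dust_bridge hole_union_iff_gaps suminf_weights
          mult_less_cancel_left1)
  qed
qed

end

theorem lemma9:
  fixes M :: "'a measure"
    and s :: "'a \<Rightarrow> nat \<Rightarrow> real"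
    and Us Vs :: "nat \<Rightarrow> 'a \<Rightarrow> real"
    and V :: "'a \<Rightarrow> real"
  assumes "prob_space M"
    and "s \<in> M \<rightarrow>\<^sub>M PiM UNIV (\<lambda>_. borel)"
    and "\<forall>\<omega>\<in>space M. finite_ranked_partition (s \<omega>)"
    and "\<And>k. distr M borel (Us k) = uniform_measure lborel {0..1}"
    and "\<And>k. distr M borel (Vs k) = uniform_measure lborel {0..1}"
    and "distr M borel V = uniform_measure lborel {0..1}"
    and "prob_space.indep_vars M (\<lambda>_. borel) (rvfam Us Vs V) UNIV"
    and "prob_space.indep_set M
           {s -` A \<inter> space M | A. A \<in> sets (PiM UNIV (\<lambda>_::nat. borel :: real measure))}
           {(\<lambda>\<omega> i. rvfam Us Vs V i \<omega>) -` A \<inter> space M | A.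
              A \<in> sets (PiM UNIV (\<lambda>_::ridx. borel :: real measure))}"
  shows "\<exists>U. U \<in> borel_measurable M \<and> distr M borel U = uniform_measure lborel {0..1} \<and>
           (AE \<omega> in M. U \<omega> < dust (bridge (s \<omega>) (\<lambda>k. Us k \<omega>)) (\<lambda>k. Vs k \<omega>)
                  \<longleftrightarrow> V \<omega> \<notin> hole_union (bridge (s \<omega>) (\<lambda>k. Us k \<omega>)))"
proof -
  interpret random_finite_bridge M s Us Vs V
    using assms by (simp add: random_finite_bridge_def random_finite_bridge_axioms_def)
  show ?thesis
    using measurable_U distr_U AE_U_less_dust_iff by blast
qed

end
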